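(* Let $\vartheta$ be a real number, $d$ a positive integer, $\tau_1,\tau_2$ positive real numbers, and $\sigma$ a non-decreasing positive function on the positive integers with $\lim_{n\to\infty}\sigma(n)=\infty$. Assume there is a sequence $(P_n)_{n\ge0}$ of polynomials in $\mathbb{Z}[X]$, with $P_n$ of degree at most $d$ and length at most $e^{\sigma(n)}$, such that $$e^{-(\tau_1+o(1))\sigma(n)}\le|P_n(\vartheta)|\le e^{-(\tau_2+o(1))\sigma(n+1)}.$$ Then $\tau_2\le d+d(\tau_1-\tau_2)$.
   Context: The length of a polynomial with integer coefficients is the sum of the absolute values of its coefficients. $o(1)$ denotes quantities tending to $0$ as $n\to\infty$. *)

theory Defs
  imports Complex_Main "HOL-Computational_Algebra.Polynomial"
begin

definition poly_length :: "int poly \<Rightarrow> int" where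
  "poly_length p = (\<Sum>i\<le>degree p. \<bar>coeff p i\<bar>)"

end

theory Submission
  imports Defs
begin

(*
  Put v_n = P_n(theta) and, for small eta > 0,
  a = tau1 + eta and b = tau2 - eta, so that eventually
      exp(-a sigma(n)) <= |v_n| <= exp(-b sigma(n+1)).
  Given a simultaneous approximation |q theta^k - y_k| <= delta (0 <= k <= d) with q large, pick
  the index m where b sigma(m) <= ln(3q) <= b sigma(m+1).  The integer sum_k c_k y_k, with c_k
  the coefficients of P_m, is either 0 or of absolute value >= 1; both cases force
  delta >= C q^(-mu) with mu = (1 + a - b)/b.  After rescaling, this lower bound holds for every
  denominator q >= 1, and comparing it with Dirichlet's theorem on simultaneous approximation
  of theta, ..., theta^d yields d mu >= 1, i.e. b <= d (1 + a - b).  Letting eta -> 0 gives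
  tau2 <= d + d (tau1 - tau2).
*)

lemma poly_of_int_as_sum:
  fixes p :: "int poly"
  assumes "degree p \<le> d"
  shows "poly (map_poly real_of_int p) x = (\<Sum>i\<le>d. real_of_int (coeff p i) * x^i)"
proof -
  have deg: "degree (map_poly real_of_int p) = degree p"
    by (rule degree_map_poly) simp
  have "poly (map_poly real_of_int p) x
      = (\<Sum>i\<le>degree (map_poly real_of_int p). coeff (map_poly real_of_int p) i * x^i)"
    by (rule poly_altdef)
  also have "\<dots> = (\<Sum>i\<le>d. coeff (map_poly real_of_int p) i * x^i)"
    by (rule sum.mono_neutral_left) (use assms deg in \<open>auto simp: coeff_eq_0\<close>)
  finally show ?thesis
    by (simp add: coeff_map_poly)
qed

lemma poly_length_as_sum:
  fixes p :: "int poly"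
  assumes "degree p \<le> d"
  shows "poly_length p = (\<Sum>i\<le>d. \<bar>coeff p i\<bar>)"
  unfolding poly_length_def
  by (rule sum.mono_neutral_left) (use assms in \<open>auto simp: coeff_eq_0\<close>)

section \<open>Dirichlet's theorem on simultaneous approximation\<close>

lemma same_grid_cell_imp_close:
  fixes u w :: real and Q :: nat
  assumes "1 \<le> Q" "0 \<le> u" "u < 1" "0 \<le> w" "w < 1"
    and "\<lfloor>Q*u\<rfloor> = \<lfloor>Q*w\<rfloor>"
  shows "\<bar>u - w\<bar> \<le> 1/Q"
proof -
  have "\<bar>Q*u - Q*w\<bar> < 1"
    using floor_correct[of "Q*u"] floor_correct[of "Q*w"] assms(6) by linarith
  moreover have "\<bar>Q*u - Q*w\<bar> = real Q * \<bar>u - w\<bar>"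
    by (simp add: right_diff_distrib[symmetric] abs_mult)
  ultimately show ?thesis
    using assms(1) by (simp add: field_simps)
qed

text \<open>Proof by pigeonhole on the grid cells of
  the fractional parts of \<open>i * x k\<close>, \<open>0 \<le> i \<le> Q^d\<close>.\<close>

lemma dirichlet_simultaneous:
  fixes x :: "nat \<Rightarrow> real" and d Q :: nat
  assumes Q: "1 \<le> Q"
  shows "\<exists>q::nat. 1 \<le> q \<and> q \<le> Q^d \<and>
           (\<exists>p::nat\<Rightarrow>int. \<forall>k\<in>{1..d}. \<bar>real q * x k - real_of_int (p k)\<bar> \<le> 1/Q)"
proof -
  define cell :: "real \<Rightarrow> nat" where "cell t = nat \<lfloor>real Q * frac t\<rfloor>" for t
  define f where "f i = map (\<lambda>k. cell (real i * x k)) [1..<d+1]" for i :: nat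
  have cell_less: "cell t < Q" for t
  proof -
    have "real Q * frac t < real Q" "0 \<le> real Q * frac t"
      using Q frac_lt_1 frac_ge_0 by simp_all
    then show ?thesis
      unfolding cell_def by (simp add: floor_less_iff nat_less_iff)
  qed
  have cells: "f ` {0..Q^d} \<subseteq> {xs. set xs \<subseteq> {..<Q} \<and> length xs = d}"
    using cell_less by (auto simp: f_def)
  have card_cells: "card {xs. set xs \<subseteq> {..<Q} \<and> length xs = d} = Q^d"
    by (simp add: card_lists_length_eq)
  have "\<not> inj_on f {0..Q^d}"
  proof
    assume "inj_on f {0..Q^d}"
    then have "card {0..Q^d} \<le> card {xs. set xs \<subseteq> {..<Q} \<and> length xs = d}"
      using cells by (intro card_inj_on_le) (auto simp: finite_lists_length_eq)
    then show False using card_cells by simp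
  qed
  then obtain i j where ij: "i < j" "j \<le> Q^d" "f i = f j"
    unfolding inj_on_def by (metis atLeastAtMost_iff linorder_neqE_nat)
  define p where "p k = \<lfloor>real j * x k\<rfloor> - \<lfloor>real i * x k\<rfloor>" for k
  have "\<bar>real (j - i) * x k - real_of_int (p k)\<bar> \<le> 1/Q" if k: "k \<in> {1..d}" for k
  proof -
    have "cell (real i * x k) = cell (real j * x k)"
      using ij(3) k unfolding f_def map_eq_conv by (auto simp del: upt_Suc)
    moreover have "0 \<le> \<lfloor>real Q * frac (real i * x k)\<rfloor>" "0 \<le> \<lfloor>real Q * frac (real j * x k)\<rfloor>"
      using frac_ge_0 by auto
    ultimately have "\<lfloor>real Q * frac (real i * x k)\<rfloor> = \<lfloor>real Q * frac (real j * x k)\<rfloor>"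
      unfolding cell_def by (metis eq_nat_nat_iff)
    then have "\<bar>frac (real i * x k) - frac (real j * x k)\<bar> \<le> 1/Q"
      by (rule same_grid_cell_imp_close[OF Q frac_ge_0 frac_lt_1 frac_ge_0 frac_lt_1])
    moreover have "real (j - i) * x k - real_of_int (p k)
        = frac (real j * x k) - frac (real i * x k)"
      using ij(1) by (simp add: p_def frac_def of_nat_diff algebra_simps)
    ultimately show ?thesis by linarith
  qed
  moreover have "1 \<le> j - i" "j - i \<le> Q^d" using ij by auto
  ultimately show ?thesis by blast
qed

lemma powr_lower_bound_imp_nonneg:
  fixes C e :: real
  assumes C: "0 < C" and bound: "\<And>Q::nat. 1 \<le> Q \<Longrightarrow> C \<le> real Q powr e"
  shows "0 \<le> e"
proof (rule ccontr)
  assume "\<not> 0 \<le> e"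
  then have "((\<lambda>Q::nat. real Q powr e) \<longlongrightarrow> 0) sequentially"
    by (intro tendsto_neg_powr filterlim_real_sequentially) simp
  then have "eventually (\<lambda>Q::nat. real Q powr e < C) sequentially"
    using C by (intro order_tendstoD) auto
  moreover have "eventually (\<lambda>Q::nat. 1 \<le> Q) sequentially"
    by (rule eventually_ge_at_top)
  ultimately have "eventually (\<lambda>Q::nat. False) sequentially"
    by eventually_elim (use bound in force)
  then show False by simp
qed

lemma approximation_exponent_ge:
  fixes x :: "nat \<Rightarrow> real" and C \<mu> :: real and d :: nat
  assumes C: "0 < C" and \<mu>: "0 \<le> \<mu>"
    and lower: "\<And>q p \<delta>. 1 \<le> q \<Longrightarrow>
      (\<forall>k\<in>{1..d}. \<bar>real q * x k - real_of_int (p k)\<bar> \<le> \<delta>) \<Longrightarrow> C * real q powr (-\<mu>) \<le> \<delta>"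
  shows "1 \<le> real d * \<mu>"
proof -
  have "C \<le> real Q powr (real d * \<mu> - 1)" if Q: "1 \<le> Q" for Q :: nat
  proof -
    obtain q p where q: "1 \<le> q" "q \<le> Q^d"
      and p: "\<forall>k\<in>{1..d}. \<bar>real q * x k - real_of_int (p k)\<bar> \<le> 1/Q"
      using dirichlet_simultaneous[OF Q] by blast
    have "C * real Q powr (- (real d * \<mu>)) = C * real (Q^d) powr (-\<mu>)"
      using Q by (simp add: powr_realpow[symmetric] powr_powr)
    also have "\<dots> \<le> C * real q powr (-\<mu>)"
      using q \<mu> C by (intro mult_left_mono powr_mono2') auto
    also have "\<dots> \<le> 1 / real Q"
      using lower[OF q(1) p] .
    finally show ?thesis
      using Q by (simp add: powr_diff powr_minus_divide field_simps)
  qed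
  then have "0 \<le> real d * \<mu> - 1"
    by (rule powr_lower_bound_imp_nonneg[OF C])
  then show ?thesis by simp
qed

section \<open>The transference step\<close>

text \<open>The integer \<open>\<Sum> c k * y k\<close> is either zero, which makes
  \<open>\<delta>\<close> at least \<open>q e^(-(1+a) s)\<close>, or nonzero, which makes \<open>\<delta>\<close> at least \<open>(2/3) e^(-s)\<close>.\<close>

lemma integer_relation_dichotomy:
  fixes q \<delta> \<theta> a b s s1 :: real and c y :: "nat \<Rightarrow> int" and d :: nat
  assumes q: "1 \<le> q" and \<delta>: "0 \<le> \<delta>"
    and approx: "\<forall>k\<le>d. \<bar>q*\<theta>^k - real_of_int (y k)\<bar> \<le> \<delta>"
    and len: "(\<Sum>k\<le>d. real_of_int \<bar>c k\<bar>) \<le> exp s"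
    and lower: "exp (-a*s) \<le> \<bar>\<Sum>k\<le>d. real_of_int (c k) * \<theta>^k\<bar>"
    and upper: "\<bar>\<Sum>k\<le>d. real_of_int (c k) * \<theta>^k\<bar> \<le> exp (-b*s1)"
    and large: "3*q \<le> exp (b*s1)"
  shows "(2/3) * exp (-s) \<le> \<delta> \<or> q * exp (-(1+a)*s) \<le> \<delta>"
proof -
  define N where "N = (\<Sum>k\<le>d. c k * y k)"
  define E where "E = (\<Sum>k\<le>d. real_of_int (c k) * (q*\<theta>^k - y k))"
  define v where "v = (\<Sum>k\<le>d. real_of_int (c k) * \<theta>^k)"
  have N_eq: "real_of_int N = q*v - E"
    unfolding N_def E_def v_def
    by (simp add: sum_distrib_left algebra_simps sum_subtractf)
  have E_bound: "\<bar>E\<bar> \<le> exp s * \<delta>"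
  proof -
    have "\<bar>E\<bar> \<le> (\<Sum>k\<le>d. \<bar>real_of_int (c k) * (q*\<theta>^k - y k)\<bar>)"
      unfolding E_def by (rule sum_abs)
    also have "\<dots> \<le> (\<Sum>k\<le>d. real_of_int \<bar>c k\<bar> * \<delta>)"
      by (rule sum_mono) (use approx in \<open>auto simp: abs_mult intro!: mult_left_mono\<close>)
    also have "\<dots> = (\<Sum>k\<le>d. real_of_int \<bar>c k\<bar>) * \<delta>"
      by (simp add: sum_distrib_right)
    also have "\<dots> \<le> exp s * \<delta>"
      using len \<delta> by (rule mult_right_mono)
    finally show ?thesis .
  qed
  have scale: "t \<le> exp s * \<delta> \<Longrightarrow> t * exp (-s) \<le> \<delta>" for t
    using mult_right_mono[of t "exp s * \<delta>" "exp (-s)"] by (simp add: exp_minus field_simps)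
  show ?thesis
  proof (cases "N = 0")
    case True
    have "q*exp(-a*s) \<le> q*\<bar>v\<bar>"
      using lower q unfolding v_def by (intro mult_left_mono) auto
    also have "q*\<bar>v\<bar> = \<bar>q*v\<bar>" using q by (simp add: abs_mult)
    also have "\<dots> = \<bar>E\<bar>" using N_eq True by simp
    also have "\<dots> \<le> exp s * \<delta>" by (rule E_bound)
    finally have "q*exp(-a*s) * exp (-s) \<le> \<delta>" by (rule scale)
    moreover have "exp(-a*s) * exp(-s) = exp(-(1+a)*s)"
      by (simp add: exp_add[symmetric] algebra_simps)
    ultimately show ?thesis by (simp add: mult.assoc)
  next
    case False
    then have "1 \<le> \<bar>real_of_int N\<bar>" by linarith
    also have "\<dots> \<le> q*\<bar>v\<bar> + \<bar>E\<bar>"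
      using N_eq q abs_triangle_ineq4[of "q*v" E] by (simp add: abs_mult)
    also have "\<dots> \<le> q*exp(-b*s1) + exp s * \<delta>"
      using upper q E_bound mult_left_mono[of "\<bar>v\<bar>" "exp(-b*s1)" q] unfolding v_def by linarith
    finally have sum_ge_1: "1 \<le> q*exp(-b*s1) + exp s * \<delta>" .
    have "q*exp(-b*s1) \<le> 1/3"
      using large q by (simp add: exp_minus field_simps)
    then have "2/3 \<le> exp s * \<delta>" using sum_ge_1 by linarith
    then have "(2/3) * exp (-s) \<le> \<delta>" by (rule scale)
    then show ?thesis ..
  qed
qed

lemma dichotomy_power_bound:
  fixes a b q s \<delta> :: real
  assumes b: "0 < b" "b \<le> a" and q: "1 \<le> q" and s: "b * s \<le> ln (3*q)"
    and cases: "(2/3) * exp (-s) \<le> \<delta> \<or> q * exp (-(1+a)*s) \<le> \<delta>"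
  shows "min ((2/3) * 3 powr (-1/b)) (3 powr (-(1+a)/b)) * q powr (-((1+a-b)/b)) \<le> \<delta>"
    (is "?C * _ \<le> _")
proof -
  have s_le: "s \<le> ln (3*q) / b" using s b by (simp add: field_simps)
  have pow3q: "(3*q) powr t = exp (t * ln (3*q))" for t
    using q by (simp add: powr_def)
  consider "(2/3) * exp (-s) \<le> \<delta>" | "q * exp (-(1+a)*s) \<le> \<delta>" using cases by blast
  then show ?thesis
  proof cases
    case 1
    have "?C * q powr (-((1+a-b)/b)) \<le> (2/3) * 3 powr (-1/b) * q powr (-1/b)"
      using b q by (intro mult_mono powr_mono) (auto simp: field_simps)
    also have "\<dots> = (2/3) * exp (- (ln (3*q) / b))"
      by (simp add: powr_mult[symmetric] pow3q)
    also have "\<dots> \<le> (2/3) * exp (-s)" using s_le by simp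
    finally show ?thesis using 1 by linarith
  next
    case 2
    define \<kappa> where "\<kappa> = (1+a)/b"
    have expo: "-((1+a-b)/b) = 1 - \<kappa>" using b unfolding \<kappa>_def by (simp add: field_simps)
    have "-(1+a)/b = -\<kappa>" unfolding \<kappa>_def by (simp add: minus_divide_left)
    then have "?C \<le> 3 powr (-\<kappa>)" by (metis min.cobounded2)
    then have "?C * q powr (-((1+a-b)/b)) \<le> 3 powr (-\<kappa>) * q powr (1 - \<kappa>)"
      unfolding expo by (rule mult_right_mono) simp
    also have "\<dots> = q * (3*q) powr (-\<kappa>)"
      using q by (simp add: powr_mult powr_diff powr_minus_divide field_simps)
    also have "\<dots> = q * exp (- (\<kappa> * ln (3*q)))"
      by (simp add: pow3q)
    also have "\<dots> \<le> q * exp (-(1+a) * s)"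
    proof -
      have "(1+a) * s \<le> (1+a) * (ln (3*q) / b)"
        using s_le b by (intro mult_left_mono) auto
      then show ?thesis
        using q unfolding \<kappa>_def by (intro mult_left_mono) (auto simp: algebra_simps)
    qed
    finally show ?thesis using 2 by linarith
  qed
qed

text \<open>This selects the polynomial adapted to a given denominator.\<close>

lemma crossing_index:
  fixes f :: "nat \<Rightarrow> real"
  assumes lim: "filterlim f at_top sequentially" and start: "f M \<le> x"
  shows "\<exists>m\<ge>M. f m \<le> x \<and> x \<le> f (Suc m)"
proof -
  define R where "R m \<longleftrightarrow> M \<le> m \<and> x \<le> f (Suc m)" for m
  obtain N where N: "\<And>n. N \<le> n \<Longrightarrow> x \<le> f n"
    using lim unfolding filterlim_at_top eventually_sequentially by blast
  have "R (max M N)" using N unfolding R_def by simp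
  define m where "m = (LEAST m. R m)"
  have Rm: "R m" unfolding m_def by (rule LeastI) fact
  have "f m \<le> x"
  proof (cases "m = M")
    case True then show ?thesis using start by simp
  next
    case False
    with Rm have m: "M \<le> m - 1" "Suc (m - 1) = m" unfolding R_def by auto
    have "\<not> R (m - 1)"
      using not_less_Least[of "m - 1" R] m(2) unfolding m_def by linarith
    with m show ?thesis unfolding R_def by auto
  qed
  with Rm show ?thesis unfolding R_def by auto
qed

lemma lower_bound_large_denominators:
  fixes \<theta> a b :: real and d M :: nat and \<sigma> :: "nat \<Rightarrow> real" and P :: "nat \<Rightarrow> int poly"
  assumes b: "0 < b" "b \<le> a" and lim: "filterlim \<sigma> at_top sequentially"
    and deg: "\<And>n. degree (P n) \<le> d"
    and len: "\<And>n. M \<le> n \<Longrightarrow> real_of_int (poly_length (P n)) \<le> exp (\<sigma> n)"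
    and lower: "\<And>n. M \<le> n \<Longrightarrow> exp (-a * \<sigma> n) \<le> \<bar>poly (map_poly real_of_int (P n)) \<theta>\<bar>"
    and upper: "\<And>n. M \<le> n \<Longrightarrow> \<bar>poly (map_poly real_of_int (P n)) \<theta>\<bar> \<le> exp (-b * \<sigma> (Suc n))"
  shows "\<exists>C>0. \<exists>Q0. \<forall>q y \<delta>. Q0 \<le> q \<longrightarrow> (\<forall>k\<le>d. \<bar>q*\<theta>^k - real_of_int (y k)\<bar> \<le> \<delta>) \<longrightarrow>
           C * q powr (-((1+a-b)/b)) \<le> \<delta>"
proof -
  define C where "C = min ((2/3) * 3 powr (-1/b)) (3 powr (-(1+a)/b))"
  have "C * q powr (-((1+a-b)/b)) \<le> \<delta>"
    if q: "max 1 (exp (b * \<sigma> M)) \<le> q" and approx: "\<forall>k\<le>d. \<bar>q*\<theta>^k - real_of_int (y k)\<bar> \<le> \<delta>"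
    for q \<delta> and y :: "nat \<Rightarrow> int"
  proof -
    have q1: "1 \<le> q" using q by simp
    have \<delta>: "0 \<le> \<delta>" using approx by force
    have "filterlim (\<lambda>n. b * \<sigma> n) at_top sequentially"
      using b(1) lim by (intro filterlim_tendsto_pos_mult_at_top[OF tendsto_const])
    moreover have "b * \<sigma> M \<le> ln (3*q)"
      using q ln_ge_iff[of "3*q" "b * \<sigma> M"] by auto
    ultimately obtain m where m: "M \<le> m" "b * \<sigma> m \<le> ln (3*q)" "ln (3*q) \<le> b * \<sigma> (Suc m)"
      using crossing_index by blast
    have "(2/3) * exp (-\<sigma> m) \<le> \<delta> \<or> q * exp (-(1+a) * \<sigma> m) \<le> \<delta>"
    proof (rule integer_relation_dichotomy[OF q1 \<delta> approx])
      show "(\<Sum>k\<le>d. real_of_int \<bar>coeff (P m) k\<bar>) \<le> exp (\<sigma> m)"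
        using len[OF m(1)] poly_length_as_sum[OF deg] by simp
      show "exp (-a * \<sigma> m) \<le> \<bar>\<Sum>k\<le>d. real_of_int (coeff (P m) k) * \<theta>^k\<bar>"
        using lower[OF m(1)] poly_of_int_as_sum[OF deg] by simp
      show "\<bar>\<Sum>k\<le>d. real_of_int (coeff (P m) k) * \<theta>^k\<bar> \<le> exp (-b * \<sigma> (Suc m))"
        using upper[OF m(1)] poly_of_int_as_sum[OF deg] by simp
      have "exp (ln (3*q)) \<le> exp (b * \<sigma> (Suc m))" using m(3) by simp
      then show "3*q \<le> exp (b * \<sigma> (Suc m))" using q1 by simp
    qed
    then show ?thesis
      unfolding C_def using dichotomy_power_bound[OF b q1 m(2)] by blast
  qed
  moreover have "0 < C" unfolding C_def by simp
  ultimately show ?thesis by blast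
qed

text \<open>Rescaling by a fixed integer \<open>s \<ge> Q0\<close> turns the bound for large denominators into a bound
  (with a smaller constant) for all denominators \<open>q \<ge> 1\<close>; the coordinate \<open>k = 0\<close> is then exact.\<close>

lemma lower_bound_all_denominators:
  fixes \<theta> C Q0 \<mu> :: real and d :: nat
  assumes d: "0 < d" and C: "0 < C"
    and large: "\<And>q y \<delta>. Q0 \<le> q \<Longrightarrow> (\<forall>k\<le>d. \<bar>q*\<theta>^k - real_of_int (y k)\<bar> \<le> \<delta>) \<Longrightarrow>
                   C * q powr (-\<mu>) \<le> \<delta>"
  shows "\<exists>C'>0. \<forall>q p \<delta>. 1 \<le> q \<longrightarrow>
           (\<forall>k\<in>{1..d}. \<bar>real q * \<theta>^k - real_of_int (p k)\<bar> \<le> \<delta>) \<longrightarrow> C' * real q powr (-\<mu>) \<le> \<delta>"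
proof -
  define s where "s = nat \<lceil>Q0\<rceil> + 1"
  have s: "Q0 \<le> real s" "1 \<le> s" unfolding s_def by linarith+
  define C' where "C' = C * real s powr (-\<mu>) / real s"
  have "C' * real q powr (-\<mu>) \<le> \<delta>"
    if q: "1 \<le> q" and approx: "\<forall>k\<in>{1..d}. \<bar>real q * \<theta>^k - real_of_int (p k)\<bar> \<le> \<delta>"
    for q :: nat and p :: "nat \<Rightarrow> int" and \<delta>
  proof -
    have \<delta>: "0 \<le> \<delta>" using approx d by force
    define y where "y k = (if k = 0 then int (s*q) else int s * p k)" for k
    have "\<bar>real (s*q) * \<theta>^k - real_of_int (y k)\<bar> \<le> real s * \<delta>" if "k \<le> d" for k
    proof (cases "k = 0")
      case True then show ?thesis using \<delta> by (simp add: y_def)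
    next
      case False
      then have "\<bar>real q * \<theta>^k - real_of_int (p k)\<bar> \<le> \<delta>" using approx \<open>k \<le> d\<close> by simp
      moreover have "real (s*q) * \<theta>^k - real_of_int (y k)
          = real s * (real q * \<theta>^k - real_of_int (p k))"
        using False by (simp add: y_def algebra_simps)
      ultimately show ?thesis by (simp add: abs_mult mult_left_mono)
    qed
    moreover have "Q0 \<le> real (s*q)"
      using s q order_trans[of Q0 "real s" "real (s*q)"] by simp
    ultimately have "C * real (s*q) powr (-\<mu>) \<le> real s * \<delta>"
      using large by blast
    then show ?thesis
      using s q unfolding C'_def by (simp add: powr_mult field_simps)
  qed
  moreover have "0 < C'" unfolding C'_def using C s by simp
  ultimately show ?thesis by blast
qed

text \<open>The bounds at one index
  give \<open>b \<le> a\<close>; the two lower-bound lemmas and the approximation exponent give the rest.\<close>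

lemma exponent_inequality:
  fixes \<theta> a b :: real and d M :: nat and \<sigma> :: "nat \<Rightarrow> real" and P :: "nat \<Rightarrow> int poly"
  assumes d: "0 < d" and b: "0 < b"
    and pos: "\<And>n. M \<le> n \<Longrightarrow> 0 < \<sigma> n" and step: "\<And>n. M \<le> n \<Longrightarrow> \<sigma> n \<le> \<sigma> (Suc n)"
    and lim: "filterlim \<sigma> at_top sequentially"
    and deg: "\<And>n. degree (P n) \<le> d"
    and len: "\<And>n. M \<le> n \<Longrightarrow> real_of_int (poly_length (P n)) \<le> exp (\<sigma> n)"
    and lower: "\<And>n. M \<le> n \<Longrightarrow> exp (-a * \<sigma> n) \<le> \<bar>poly (map_poly real_of_int (P n)) \<theta>\<bar>"
    and upper: "\<And>n. M \<le> n \<Longrightarrow> \<bar>poly (map_poly real_of_int (P n)) \<theta>\<bar> \<le> exp (-b * \<sigma> (Suc n))"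
  shows "b \<le> real d * (1 + a - b)"
proof -
  have "exp (-a * \<sigma> M) \<le> exp (-b * \<sigma> (Suc M))"
    using lower[OF order_refl] upper[OF order_refl] by (rule order_trans)
  also have "\<dots> \<le> exp (-b * \<sigma> M)"
    using step[OF order_refl] b by (simp add: mult_left_mono)
  finally have ab: "b \<le> a" using pos[OF order_refl] by simp
  obtain C Q0 where "0 < C" and large: "\<forall>q y \<delta>. Q0 \<le> q \<longrightarrow>
      (\<forall>k\<le>d. \<bar>q*\<theta>^k - real_of_int (y k)\<bar> \<le> \<delta>) \<longrightarrow> C * q powr (-((1+a-b)/b)) \<le> \<delta>"
    using lower_bound_large_denominators[OF b ab lim deg len lower upper] by blast
  then obtain C' where "0 < C'" and all: "\<forall>q p \<delta>. 1 \<le> q \<longrightarrow>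
      (\<forall>k\<in>{1..d}. \<bar>real q * \<theta>^k - real_of_int (p k)\<bar> \<le> \<delta>) \<longrightarrow>
      C' * real q powr (-((1+a-b)/b)) \<le> \<delta>"
    using lower_bound_all_denominators[OF d] by blast
  have "1 \<le> real d * ((1+a-b)/b)"
    by (rule approximation_exponent_ge[where x = "\<lambda>k. \<theta>^k", OF \<open>0 < C'\<close>]) (use ab b all in auto)
  then show ?thesis using b by (simp add: field_simps)
qed

text \<open>The \<open>o(1)\<close> terms are absorbed by a margin \<open>\<eta> > 0\<close> in both exponents from some index on.\<close>

lemma relaxed_exponent_bounds:
  fixes \<sigma> \<epsilon>1 \<epsilon>2 w :: "nat \<Rightarrow> real" and \<tau>1 \<tau>2 \<eta> :: real
  assumes \<eta>: "0 < \<eta>" and \<epsilon>1: "\<epsilon>1 \<longlonglongrightarrow> 0" and \<epsilon>2: "\<epsilon>2 \<longlonglongrightarrow> 0"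
    and pos: "\<And>n. 1 \<le> n \<Longrightarrow> 0 < \<sigma> n"
    and lower: "\<And>n. 1 \<le> n \<Longrightarrow> exp (- (\<tau>1 + \<epsilon>1 n) * \<sigma> n) \<le> w n"
    and upper: "\<And>n. 1 \<le> n \<Longrightarrow> w n \<le> exp (- (\<tau>2 + \<epsilon>2 n) * \<sigma> (n + 1))"
  shows "\<exists>M\<ge>1. \<forall>n\<ge>M. exp (-(\<tau>1 + \<eta>) * \<sigma> n) \<le> w n \<and> w n \<le> exp (-(\<tau>2 - \<eta>) * \<sigma> (Suc n))"
proof -
  have "eventually (\<lambda>n. \<epsilon>1 n < \<eta>) sequentially" "eventually (\<lambda>n. -\<eta> < \<epsilon>2 n) sequentially"
    using \<epsilon>1 \<epsilon>2 \<eta> by (auto intro: order_tendstoD)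
  then obtain M where M: "\<And>n. M \<le> n \<Longrightarrow> \<epsilon>1 n < \<eta> \<and> -\<eta> < \<epsilon>2 n"
    unfolding eventually_sequentially by (metis max.bounded_iff)
  have "exp (-(\<tau>1 + \<eta>) * \<sigma> n) \<le> w n \<and> w n \<le> exp (-(\<tau>2 - \<eta>) * \<sigma> (Suc n))"
    if n: "max M 1 \<le> n" for n
  proof -
    have n1: "1 \<le> n" using n by simp
    have exponents: "-(\<tau>1 + \<eta>) * \<sigma> n \<le> - (\<tau>1 + \<epsilon>1 n) * \<sigma> n"
      "- (\<tau>2 + \<epsilon>2 n) * \<sigma> (n + 1) \<le> -(\<tau>2 - \<eta>) * \<sigma> (n + 1)"
      using M[of n] n pos[of n] pos[of "n + 1"] by (auto intro!: mult_right_mono)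
    have "exp (-(\<tau>1 + \<eta>) * \<sigma> n) \<le> exp (- (\<tau>1 + \<epsilon>1 n) * \<sigma> n)"
      using exponents(1) by (simp only: exp_le_cancel_iff)
    also have "\<dots> \<le> w n" by (rule lower[OF n1])
    finally have low: "exp (-(\<tau>1 + \<eta>) * \<sigma> n) \<le> w n" .
    have "w n \<le> exp (- (\<tau>2 + \<epsilon>2 n) * \<sigma> (n + 1))" by (rule upper[OF n1])
    also have "\<dots> \<le> exp (-(\<tau>2 - \<eta>) * \<sigma> (n + 1))"
      using exponents(2) by (simp only: exp_le_cancel_iff)
    finally show ?thesis using low by simp
  qed
  then show ?thesis by (intro exI[of _ "max M 1"]) auto
qed

lemma le_of_le_up_to_margin:
  fixes x y c K :: real
  assumes c: "0 < c" and K: "0 \<le> K"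
    and margin: "\<And>\<eta>. 0 < \<eta> \<Longrightarrow> \<eta> < c \<Longrightarrow> x - \<eta> \<le> y + K * \<eta>"
  shows "x \<le> y"
proof (rule field_le_epsilon)
  fix e :: real assume "0 < e"
  define \<eta> where "\<eta> = min (c/2) (e / (K + 1))"
  have \<eta>: "0 < \<eta>" "\<eta> < c"
    unfolding \<eta>_def using \<open>0 < e\<close> c K by auto
  have "\<eta> \<le> e / (K + 1)" unfolding \<eta>_def by simp
  then have "(K + 1) * \<eta> \<le> e" using K by (simp add: field_simps)
  then show "x \<le> y + e"
    using margin[OF \<eta>] by (simp add: ring_distribs)
qed

theorem mainTheorem10:
  fixes \<theta> \<tau>1 \<tau>2 :: real and d :: nat
    and \<sigma> :: "nat \<Rightarrow> real" and P :: "nat \<Rightarrow> int poly"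
    and \<epsilon>1 \<epsilon>2 :: "nat \<Rightarrow> real"
  assumes "d > 0" and "\<tau>1 > 0" and "\<tau>2 > 0"
    and "\<And>n. n \<ge> 1 \<Longrightarrow> \<sigma> n > 0"
    and "\<And>m n. 1 \<le> m \<Longrightarrow> m \<le> n \<Longrightarrow> \<sigma> m \<le> \<sigma> n"
    and "filterlim \<sigma> at_top sequentially"
    and "\<And>n. degree (P n) \<le> d"
    and "\<And>n. n \<ge> 1 \<Longrightarrow> real_of_int (poly_length (P n)) \<le> exp (\<sigma> n)"
    and "\<epsilon>1 \<longlonglongrightarrow> 0" and "\<epsilon>2 \<longlonglongrightarrow> 0"
    and "\<And>n. n \<ge> 1 \<Longrightarrow>
           exp (- (\<tau>1 + \<epsilon>1 n) * \<sigma> n) \<le> \<bar>poly (map_poly real_of_int (P n)) \<theta>\<bar>"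
    and "\<And>n. n \<ge> 1 \<Longrightarrow>
           \<bar>poly (map_poly real_of_int (P n)) \<theta>\<bar> \<le> exp (- (\<tau>2 + \<epsilon>2 n) * \<sigma> (n + 1))"
  shows "\<tau>2 \<le> real d + real d * (\<tau>1 - \<tau>2)"
proof (rule le_of_le_up_to_margin[OF assms(3), where K = "2 * real d"])
  fix \<eta> :: real assume \<eta>: "0 < \<eta>" "\<eta> < \<tau>2"
  obtain M where "1 \<le> M" and bounds: "\<forall>n\<ge>M.
      exp (-(\<tau>1 + \<eta>) * \<sigma> n) \<le> \<bar>poly (map_poly real_of_int (P n)) \<theta>\<bar> \<and>
      \<bar>poly (map_poly real_of_int (P n)) \<theta>\<bar> \<le> exp (-(\<tau>2 - \<eta>) * \<sigma> (Suc n))"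
    using relaxed_exponent_bounds[where w = "\<lambda>n. \<bar>poly (map_poly real_of_int (P n)) \<theta>\<bar>",
        OF \<eta>(1) assms(9,10,4,11,12)] by blast
  have "\<tau>2 - \<eta> \<le> real d * (1 + (\<tau>1 + \<eta>) - (\<tau>2 - \<eta>))"
  proof (rule exponent_inequality[where M = M, OF assms(1) _ _ _ assms(6,7)])
    fix n assume n: "M \<le> n"
    then show "0 < \<sigma> n" "\<sigma> n \<le> \<sigma> (Suc n)" "real_of_int (poly_length (P n)) \<le> exp (\<sigma> n)"
      using assms(4,8)[of n] assms(5)[of n "Suc n"] \<open>1 \<le> M\<close> by simp_all
    show "exp (- (\<tau>1 + \<eta>) * \<sigma> n) \<le> \<bar>poly (map_poly real_of_int (P n)) \<theta>\<bar>"
      "\<bar>poly (map_poly real_of_int (P n)) \<theta>\<bar> \<le> exp (- (\<tau>2 - \<eta>) * \<sigma> (Suc n))"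
      using bounds n by simp_all
  qed (use \<eta> in simp)
  then show "\<tau>2 - \<eta> \<le> real d + real d * (\<tau>1 - \<tau>2) + 2 * real d * \<eta>"
    by (simp add: algebra_simps)
qed simp

end
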